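(* Let $L\ge2$ be an integer, $\Lambda,\tilde\Lambda\subset\mathbb R^k$, $\Omega,\tilde\Omega\subset\mathbb R^n$, $U,\tilde U\subset\mathbb R^m$ open, with $k\ge m$, and let $f:\Lambda\to\tilde\Lambda$, $g:\Omega\to\tilde\Omega$, $h:U\to\tilde U$ be $C^L$-diffeomorphisms. Let $\Pi:\Lambda\times\Omega\to U$ and define $\tilde\Pi:\tilde\Lambda\times\tilde\Omega\to\tilde U$ by $\tilde\Pi(f(\lambda),g(\omega))=h(\Pi(\lambda,\omega))$. If $\Pi$ is $C^L$-smooth and locally transversal, then $\tilde\Pi$ is $C^L$-smooth and locally transversal.
   Context: Transversality. For a $C^L$ map $\Pi:\Lambda\times\Omega\to\mathbb R^m$ ($\Lambda\subset\mathbb R^k$, $\Omega\subset\mathbb R^n$ open, $k\ge m$), put $\Phi(\lambda,v,w)=\frac{\Pi(\lambda,v)-\Pi(\lambda,w)}{|v-w|}$ for $v\ne w$. $\Pi$ is transversal on $\Lambda\times\Omega$ if there is $C>0$ such that for all $\lambda$ and all $v\neq w$: if $|\Phi(\lambda,v,w)|\le C$ then $|\det(D_\lambda\Phi(\lambda,v,w)\,(D_\lambda\Phi(\lambda,v,w))^{\mathsf T})|\ge C^2$. $\Pi$ is locally transversal if $\Lambda\times\Omega$ can be covered by open sets on each of which the restriction of $\Pi$ is transversal. *)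

theory Defs
  imports "HOL-Analysis.Analysis"
begin

text \<open>C^L smoothness on a set S (used only for open S): C^0 = continuous;
  C^(L+1) = Frechet differentiable at every point of S, and every directional
  derivative x \<mapsto> f'(x) v is C^L on S.\<close>
fun Ck_on :: "nat \<Rightarrow> ('a::real_normed_vector \<Rightarrow> 'b::real_normed_vector) \<Rightarrow> 'a set \<Rightarrow> bool" where
  "Ck_on 0 f S = continuous_on S f"
| "Ck_on (Suc L) f S =
     (\<exists>f'. (\<forall>x\<in>S. (f has_derivative f' x) (at x)) \<and> (\<forall>v. Ck_on L (\<lambda>x. f' x v) S))"

definition Ck_diffeo :: "nat \<Rightarrow> ('a::real_normed_vector \<Rightarrow> 'b::real_normed_vector) \<Rightarrow> 'a set \<Rightarrow> 'b set \<Rightarrow> bool" where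
  "Ck_diffeo L f S T \<longleftrightarrow>
     (\<exists>g. f ` S \<subseteq> T \<and> g ` T \<subseteq> S \<and> (\<forall>x\<in>S. g (f x) = x) \<and> (\<forall>y\<in>T. f (g y) = y)
          \<and> Ck_on L f S \<and> Ck_on L g T)"

definition Phi :: "((real^'k) \<times> (real^'n) \<Rightarrow> real^'m) \<Rightarrow> real^'k \<Rightarrow> real^'n \<Rightarrow> real^'n \<Rightarrow> real^'m"
  where "Phi P l v w = (1 / norm (v - w)) *\<^sub>R (P (l, v) - P (l, w))"

definition transversal_on :: "((real^'k) \<times> (real^'n) \<Rightarrow> real^'m) \<Rightarrow> (real^'k) set \<Rightarrow> (real^'n) set \<Rightarrow> bool" where
  "transversal_on P A B \<longleftrightarrow>
     (\<exists>C>0. \<forall>l\<in>A. \<forall>v\<in>B. \<forall>w\<in>B. v \<noteq> w \<longrightarrow> norm (Phi P l v w) \<le> C \<longrightarrow>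
        \<bar>det (jacobian (\<lambda>l'. Phi P l' v w) (at l) ** transpose (jacobian (\<lambda>l'. Phi P l' v w) (at l)))\<bar> \<ge> C\<^sup>2)"

definition locally_transversal_on :: "((real^'k) \<times> (real^'n) \<Rightarrow> real^'m) \<Rightarrow> (real^'k) set \<Rightarrow> (real^'n) set \<Rightarrow> bool" where
  "locally_transversal_on P A B \<longleftrightarrow>
     (\<forall>p\<in>A \<times> B. \<exists>A' B'. open A' \<and> open B' \<and> p \<in> A' \<times> B' \<and> A' \<subseteq> A \<and> B' \<subseteq> B \<and> transversal_on P A' B')"

end

theory Submission
  imports Defs
begin

text \<open>
  Write Pt(l', w') = h (P (f^-1 l', g^-1 w')) and change coordinates one factor at a time; each
  step preserves C^L smoothness by the chain rule, and local transversality for the following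
  reasons. Reparametrising the fibre by g^-1 multiplies Phi and its l-Jacobian D by the
  ratio |v - w| / |g v - g w|, which is bounded below by 1 / Lip(g).
  Reparametrising the parameter multiplies D on the right by the invertible Jacobian J of f^-1.
  Composing with h replaces D by H D + E, where H = Dh(P(l, v)) is invertible and |E| = O(|Phi|)
  because Dh is Lipschitz (this is where L \<ge> 2 is used). On small compact neighbourhoods H, J
  and D range over compact sets, and det (X X^T) is continuous in X = (H D + E) J and positive
  for E = 0; hence it stays uniformly positive once |Phi|, and with it |E|, is small.
\<close>

section \<open>C^L maps\<close>

lemma Ck_on_imp_continuous_on: "Ck_on L f S \<Longrightarrow> continuous_on S f"
proof (induction L arbitrary: f)
  case (Suc L)
  then obtain f' where "\<forall>x\<in>S. (f has_derivative f' x) (at x)"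
    by auto
  then show ?case
    using continuous_at_imp_continuous_on has_derivative_continuous by blast
qed simp

lemma Ck_on_SucD: "Ck_on (Suc L) f S \<Longrightarrow> Ck_on L f S"
proof (induction L arbitrary: f)
  case 0
  then show ?case
    by (metis Ck_on.simps(1) Ck_on_imp_continuous_on)
next
  case (Suc L)
  then obtain f' where "\<forall>x\<in>S. (f has_derivative f' x) (at x)" "\<forall>v. Ck_on (Suc L) (\<lambda>x. f' x v) S"
    by auto
  with Suc.IH show ?case
    by auto
qed

lemma Ck_on_SucE:
  assumes "Ck_on (Suc L) f S"
  obtains f' where "\<forall>x\<in>S. (f has_derivative f' x) (at x)" "\<forall>v. Ck_on L (\<lambda>x. f' x v) S"
  using assms by auto

lemma Ck_on_le: "Ck_on L f S \<Longrightarrow> L' \<le> L \<Longrightarrow> Ck_on L' f S"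
proof (induction L)
  case (Suc L)
  then show ?case
    using Ck_on_SucD le_Suc_eq by blast
qed simp

lemma Ck_on_C1:
  assumes "Ck_on L f S" "1 \<le> L"
  obtains f' where "\<forall>x\<in>S. (f has_derivative f' x) (at x)" "\<forall>v. continuous_on S (\<lambda>x. f' x v)"
proof -
  have "Ck_on (Suc 0) f S"
    using Ck_on_le assms by (metis One_nat_def)
  with that show thesis
    by auto
qed

lemma Ck_on_imp_differentiable:
  "Ck_on L f S \<Longrightarrow> 1 \<le> L \<Longrightarrow> x \<in> S \<Longrightarrow> f differentiable (at x)"
  by (meson Ck_on_C1 differentiable_def)

lemma open_vimage_Ck_on:
  "open S \<Longrightarrow> Ck_on L f S \<Longrightarrow> open T \<Longrightarrow> open (f -` T \<inter> S)"
  using continuous_on_open_vimage Ck_on_imp_continuous_on by blast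

lemma Ck_on_cong:
  assumes "open S" "\<And>x. x \<in> S \<Longrightarrow> f x = g x" "Ck_on L f S"
  shows "Ck_on L g S"
  using assms(2,3)
proof (induction L arbitrary: f g)
  case 0
  then show ?case
    using continuous_on_cong by auto
next
  case (Suc L)
  then obtain f' where "\<forall>x\<in>S. (f has_derivative f' x) (at x)" "\<forall>v. Ck_on L (\<lambda>x. f' x v) S"
    by auto
  moreover have "(g has_derivative f' x) (at x)" if "x \<in> S" "(f has_derivative f' x) (at x)" for x
    using has_derivative_transform_within_open[OF that(2) assms(1) that(1)] Suc.prems(1) by simp
  ultimately show ?case
    by auto
qed

lemma Ck_on_const: "Ck_on L (\<lambda>x. c) S"
proof (induction L arbitrary: c)
  case (Suc L)
  have "\<forall>x\<in>S. ((\<lambda>x. c) has_derivative (\<lambda>v. 0)) (at x)"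
    by simp
  with Suc.IH show ?case
    by (intro Ck_on.simps(2)[THEN iffD2] exI[of _ "\<lambda>x v. 0"]) auto
qed simp

lemma Ck_on_add:
  "Ck_on L f S \<Longrightarrow> Ck_on L g S \<Longrightarrow> Ck_on L (\<lambda>x. f x + g x) S"
proof (induction L arbitrary: f g)
  case 0
  then show ?case
    by (simp add: continuous_on_add)
next
  case (Suc L)
  obtain f' g' where
    "\<forall>x\<in>S. (f has_derivative f' x) (at x)" "\<forall>v. Ck_on L (\<lambda>x. f' x v) S"
    "\<forall>x\<in>S. (g has_derivative g' x) (at x)" "\<forall>v. Ck_on L (\<lambda>x. g' x v) S"
    using Suc.prems by auto
  then have "\<forall>x\<in>S. ((\<lambda>x. f x + g x) has_derivative (\<lambda>v. f' x v + g' x v)) (at x)"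
    by (auto intro: has_derivative_add)
  with Suc.IH \<open>\<forall>v. Ck_on L (\<lambda>x. f' x v) S\<close> \<open>\<forall>v. Ck_on L (\<lambda>x. g' x v) S\<close> show ?case
    by auto
qed

lemma Ck_on_scaleR:
  "Ck_on L a S \<Longrightarrow> Ck_on L f S \<Longrightarrow> Ck_on L (\<lambda>x. a x *\<^sub>R f x) S"
proof (induction L arbitrary: a f)
  case 0
  then show ?case
    by (simp add: continuous_on_scaleR)
next
  case (Suc L)
  obtain a' f' where
    a': "\<forall>x\<in>S. (a has_derivative a' x) (at x)" "\<forall>v. Ck_on L (\<lambda>x. a' x v) S" and
    f': "\<forall>x\<in>S. (f has_derivative f' x) (at x)" "\<forall>v. Ck_on L (\<lambda>x. f' x v) S"
    using Suc.prems by auto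
  have "Ck_on L (\<lambda>x. a x *\<^sub>R f' x v + a' x v *\<^sub>R f x) S" for v
    using Suc.IH[OF Ck_on_SucD[OF Suc.prems(1)] f'(2)[rule_format]]
      Suc.IH[OF a'(2)[rule_format] Ck_on_SucD[OF Suc.prems(2)]]
    by (rule Ck_on_add)
  moreover have "\<forall>x\<in>S. ((\<lambda>x. a x *\<^sub>R f x) has_derivative (\<lambda>v. a x *\<^sub>R f' x v + a' x v *\<^sub>R f x)) (at x)"
    using a' f' by (auto intro: has_derivative_scaleR)
  ultimately show ?case
    by auto
qed

lemma Ck_on_sum:
  "finite I \<Longrightarrow> (\<And>i. i \<in> I \<Longrightarrow> Ck_on L (f i) S) \<Longrightarrow> Ck_on L (\<lambda>x. \<Sum>i\<in>I. f i x) S"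
  by (induction I rule: finite_induct) (simp_all add: Ck_on_const Ck_on_add)

lemma Ck_on_bounded_linear:
  "bounded_linear T \<Longrightarrow> Ck_on L f S \<Longrightarrow> Ck_on L (\<lambda>x. T (f x)) S"
proof (induction L arbitrary: f)
  case 0
  then show ?case
    by (simp add: continuous_on_compose2[of UNIV T] linear_continuous_on)
next
  case (Suc L)
  then obtain f' where f': "\<forall>x\<in>S. (f has_derivative f' x) (at x)" "\<forall>v. Ck_on L (\<lambda>x. f' x v) S"
    by auto
  have "\<forall>x\<in>S. ((\<lambda>x. T (f x)) has_derivative (\<lambda>v. T (f' x v))) (at x)"
    using f'(1) Suc.prems(1) by (auto intro: bounded_linear.has_derivative)
  then show ?case
    using Suc.IH Suc.prems(1) f'(2) by auto
qed

lemma Ck_on_ident: "Ck_on L (\<lambda>x. x) S"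
proof (cases L)
  case (Suc L')
  have "\<forall>x\<in>S. ((\<lambda>x. x) has_derivative (\<lambda>v. v)) (at x)"
    by simp
  with Ck_on_const show ?thesis
    unfolding Suc by (intro Ck_on.simps(2)[THEN iffD2] exI[of _ "\<lambda>x v. v"]) auto
qed simp

lemma Ck_on_Pair:
  "Ck_on L f S \<Longrightarrow> Ck_on L g S \<Longrightarrow> Ck_on L (\<lambda>x. (f x, g x)) S"
proof (induction L arbitrary: f g)
  case 0
  then show ?case
    by (simp add: continuous_on_Pair)
next
  case (Suc L)
  obtain f' g' where
    "\<forall>x\<in>S. (f has_derivative f' x) (at x)" "\<forall>v. Ck_on L (\<lambda>x. f' x v) S"
    "\<forall>x\<in>S. (g has_derivative g' x) (at x)" "\<forall>v. Ck_on L (\<lambda>x. g' x v) S"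
    using Suc.prems by auto
  then have "\<forall>x\<in>S. ((\<lambda>x. (f x, g x)) has_derivative (\<lambda>v. (f' x v, g' x v))) (at x)"
    by (auto intro: has_derivative_Pair)
  with Suc.IH \<open>\<forall>v. Ck_on L (\<lambda>x. f' x v) S\<close> \<open>\<forall>v. Ck_on L (\<lambda>x. g' x v) S\<close> show ?case
    by auto
qed

lemma linear_eq_sum_Basis:
  fixes T :: "'a::euclidean_space \<Rightarrow> 'b::real_vector"
  assumes "linear T"
  shows "T u = (\<Sum>i\<in>Basis. (u \<bullet> i) *\<^sub>R T i)"
proof -
  have "T u = T (\<Sum>i\<in>Basis. (u \<bullet> i) *\<^sub>R i)"
    by (simp add: euclidean_representation)
  also have "\<dots> = (\<Sum>i\<in>Basis. (u \<bullet> i) *\<^sub>R T i)"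
    by (simp add: linear_sum[OF assms] linear_cmul[OF assms])
  finally show ?thesis .
qed

lemma Ck_on_compose:
  fixes h :: "'b::euclidean_space \<Rightarrow> 'c::real_normed_vector"
    and F :: "'a::real_normed_vector \<Rightarrow> 'b"
  assumes "open S" "Ck_on L h U" "Ck_on L F S" "F ` S \<subseteq> U"
  shows "Ck_on L (\<lambda>x. h (F x)) S"
  using assms(2-4)
proof (induction L arbitrary: h F)
  case 0
  then show ?case
    by (simp add: continuous_on_compose2)
next
  case (Suc L)
  obtain h' where h': "\<forall>y\<in>U. (h has_derivative h' y) (at y)" "\<forall>v. Ck_on L (\<lambda>y. h' y v) U"
    using Suc.prems by auto
  obtain F' where F': "\<forall>x\<in>S. (F has_derivative F' x) (at x)" "\<forall>v. Ck_on L (\<lambda>x. F' x v) S"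
    using Suc.prems by auto
  have "((\<lambda>x. h (F x)) has_derivative (\<lambda>v. h' (F x) (F' x v))) (at x)" if "x \<in> S" for x
    using diff_chain_at[OF F'(1)[rule_format, OF that] h'(1)[rule_format]] that Suc.prems(3)
    by (auto simp: o_def)
  moreover have "Ck_on L (\<lambda>x. h' (F x) (F' x v)) S" for v
  proof (rule Ck_on_cong[OF assms(1)])
    show "(\<Sum>i\<in>Basis. (F' x v \<bullet> i) *\<^sub>R h' (F x) i) = h' (F x) (F' x v)" if "x \<in> S" for x
      using that Suc.prems(3) h'(1) by (metis linear_eq_sum_Basis has_derivative_linear image_subset_iff)
    show "Ck_on L (\<lambda>x. \<Sum>i\<in>Basis. (F' x v \<bullet> i) *\<^sub>R h' (F x) i) S"
      using Suc.IH[OF h'(2)[rule_format] Ck_on_SucD[OF Suc.prems(2)] Suc.prems(3)]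
        Ck_on_bounded_linear[OF bounded_linear_inner_left F'(2)[rule_format]]
      by (intro Ck_on_sum Ck_on_scaleR) auto
  qed
  ultimately show ?case
    by (intro Ck_on.simps(2)[THEN iffD2] exI[of _ "\<lambda>x v. h' (F x) (F' x v)"]) blast
qed

lemma Ck_on_reparametrize:
  fixes f :: "'a::euclidean_space \<Rightarrow> 'c::euclidean_space" and g :: "'b::euclidean_space \<Rightarrow> 'd::euclidean_space"
    and P :: "'c \<times> 'd \<Rightarrow> 'e::real_normed_vector"
  assumes "open A" "open B" "Ck_on L P (S \<times> T)" "Ck_on L f A" "f ` A \<subseteq> S" "Ck_on L g B" "g ` B \<subseteq> T"
  shows "Ck_on L (\<lambda>(x, y). P (f x, g y)) (A \<times> B)"
proof -
  have AB: "open (A \<times> B)"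
    using assms(1,2) by (rule open_Times)
  have "Ck_on L (\<lambda>z. f (fst z)) (A \<times> B)"
    by (rule Ck_on_compose[OF AB assms(4) Ck_on_bounded_linear[OF bounded_linear_fst Ck_on_ident]]) auto
  moreover have "Ck_on L (\<lambda>z. g (snd z)) (A \<times> B)"
    by (rule Ck_on_compose[OF AB assms(6) Ck_on_bounded_linear[OF bounded_linear_snd Ck_on_ident]]) auto
  ultimately have "Ck_on L (\<lambda>z. P (f (fst z), g (snd z))) (A \<times> B)"
    by (rule Ck_on_compose[OF AB assms(3) Ck_on_Pair]) (use assms(5,7) in auto)
  then show ?thesis
    by (simp add: case_prod_unfold)
qed

lemma Ck_diffeo_le: "Ck_diffeo L f S T \<Longrightarrow> L' \<le> L \<Longrightarrow> Ck_diffeo L' f S T"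
  unfolding Ck_diffeo_def by (metis Ck_on_le)

lemma Ck_diffeo_inverse:
  assumes "Ck_diffeo L f S T"
  obtains g where "Ck_diffeo L g T S" "\<forall>y\<in>T. f (g y) = y"
proof -
  obtain g where "f ` S \<subseteq> T" "g ` T \<subseteq> S" "\<forall>x\<in>S. g (f x) = x" "\<forall>y\<in>T. f (g y) = y"
      "Ck_on L f S" "Ck_on L g T"
    using assms unfolding Ck_diffeo_def by blast
  then show thesis
    using that unfolding Ck_diffeo_def by blast
qed

section \<open>Bounds on derivatives\<close>

lemma norm_linear_le_Basis:
  fixes T :: "'a::euclidean_space \<Rightarrow> 'b::real_normed_vector"
  assumes "linear T" "\<forall>i\<in>Basis. norm (T i) \<le> c"
  shows "norm (T u) \<le> real DIM('a) * c * norm u"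
proof -
  have "norm (T u) \<le> (\<Sum>i\<in>Basis. norm ((u \<bullet> i) *\<^sub>R T i))"
    unfolding linear_eq_sum_Basis[OF assms(1), of u] by (rule norm_sum)
  also have "\<dots> \<le> (\<Sum>i\<in>(Basis::'a set). norm u * c)"
  proof (rule sum_mono)
    fix i :: 'a
    assume "i \<in> Basis"
    then show "norm ((u \<bullet> i) *\<^sub>R T i) \<le> norm u * c"
      using assms(2) Basis_le_norm[of i u] by (simp add: mult_mono')
  qed
  finally show ?thesis
    by (simp add: mult_ac)
qed

lemma derivative_bounded_on_compact:
  fixes F :: "'a::euclidean_space \<Rightarrow> 'b::real_normed_vector"
  assumes "\<forall>x\<in>S. (F has_derivative F' x) (at x)" "\<forall>v. continuous_on S (\<lambda>x. F' x v)"
    and "compact K" "K \<subseteq> S"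
  shows "\<exists>B\<ge>0. \<forall>x\<in>K. \<forall>u. norm (F' x u) \<le> B * norm u"
proof -
  have "compact ((\<lambda>x. F' x i) ` K)" for i
    using assms(2-4) by (meson compact_continuous_image continuous_on_subset)
  then have "bounded (\<Union>i\<in>Basis. (\<lambda>x. F' x i) ` K)"
    by (simp add: compact_imp_bounded compact_UN)
  then obtain c where c: "\<forall>i\<in>Basis. \<forall>x\<in>K. norm (F' x i) \<le> c"
    unfolding bounded_iff by blast
  have "norm (F' x u) \<le> real DIM('a) * max c 0 * norm u" if "x \<in> K" for x u
    using assms(1,4) that c by (intro norm_linear_le_Basis has_derivative_linear) force+
  then show ?thesis
    by (intro exI[of _ "real DIM('a) * max c 0"]) auto
qed

lemma Ck_on_lipschitz_on_convex:
  fixes F :: "'a::euclidean_space \<Rightarrow> 'b::real_normed_vector"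
  assumes "Ck_on L F S" "1 \<le> L" "compact K" "convex K" "K \<subseteq> S"
  shows "\<exists>B\<ge>1. \<forall>x\<in>K. \<forall>y\<in>K. norm (F x - F y) \<le> B * norm (x - y)"
proof -
  obtain F' where F': "\<forall>x\<in>S. (F has_derivative F' x) (at x)" "\<forall>v. continuous_on S (\<lambda>x. F' x v)"
    using Ck_on_C1[OF assms(1,2)] by blast
  obtain B where B: "\<forall>x\<in>K. \<forall>u. norm (F' x u) \<le> B * norm u"
    using derivative_bounded_on_compact[OF F' assms(3,5)] by blast
  have "norm (F x - F y) \<le> max B 1 * norm (x - y)" if "x \<in> K" "y \<in> K" for x y
  proof (rule differentiable_bound[OF assms(4) _ _ that])
    show "(F has_derivative F' z) (at z within K)" if "z \<in> K" for z
      using F'(1) assms(5) that has_derivative_at_withinI by blast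
    show "onorm (F' z) \<le> max B 1" if "z \<in> K" for z
    proof (rule onorm_le)
      fix u :: 'a
      have "B * norm u \<le> max B 1 * norm u"
        by (simp add: mult_right_mono)
      with B that show "norm (F' z u) \<le> max B 1 * norm u"
        by (blast intro: order_trans)
    qed
  qed
  then show ?thesis
    by (intro exI[of _ "max B 1"]) auto
qed

lemma derivative_lipschitz_on_convex:
  fixes F :: "'a::euclidean_space \<Rightarrow> 'b::real_normed_vector"
  assumes "\<forall>x\<in>S. (F has_derivative F' x) (at x)" "\<forall>v. Ck_on 1 (\<lambda>x. F' x v) S"
    and "compact K" "convex K" "K \<subseteq> S"
  shows "\<exists>B\<ge>0. \<forall>x\<in>K. \<forall>y\<in>K. \<forall>u. norm (F' x u - F' y u) \<le> B * norm (x - y) * norm u"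
proof -
  have "\<forall>i\<in>Basis. \<exists>B. \<forall>x\<in>K. \<forall>y\<in>K. norm (F' x i - F' y i) \<le> B * norm (x - y)"
    using Ck_on_lipschitz_on_convex[OF assms(2)[rule_format] _ assms(3-5)] by blast
  then obtain b where b: "\<forall>i\<in>Basis. \<forall>x\<in>K. \<forall>y\<in>K. norm (F' x i - F' y i) \<le> b i * norm (x - y)"
    by metis
  define B where "B = Max ((\<lambda>i. \<bar>b i\<bar>) ` Basis)"
  have "norm (F' x u - F' y u) \<le> (real DIM('a) * B) * norm (x - y) * norm u"
    if "x \<in> K" "y \<in> K" for x y u
  proof -
    have "linear (\<lambda>u. F' x u - F' y u)"
      using assms(1,5) that by (intro linear_compose_sub has_derivative_linear) auto
    moreover have "norm (F' x i - F' y i) \<le> B * norm (x - y)" if "i \<in> Basis" for i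
    proof -
      have "b i \<le> B"
        unfolding B_def using that by (intro order_trans[OF abs_ge_self Max_ge]) auto
      then show ?thesis
        using b that \<open>x \<in> K\<close> \<open>y \<in> K\<close> by (meson mult_right_mono norm_ge_zero order_trans)
    qed
    ultimately have "norm (F' x u - F' y u) \<le> real DIM('a) * (B * norm (x - y)) * norm u"
      by (intro norm_linear_le_Basis) auto
    then show ?thesis
      by (simp add: mult.assoc)
  qed
  moreover have "0 \<le> B"
    unfolding B_def using nonempty_Basis by (meson Max_ge abs_ge_zero ex_in_conv finite_Basis finite_imageI imageI order_trans)
  ultimately show ?thesis
    by (intro exI[of _ "real DIM('a) * B"]) auto
qed

lemma det_derivative_nonzero_of_left_inverse:
  fixes F G :: "real^'n \<Rightarrow> real^'n"
  assumes "open S" "x \<in> S" "(F has_derivative F') (at x)" "(G has_derivative G') (at (F x))"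
    and "\<forall>y\<in>S. G (F y) = y"
  shows "det (matrix F') \<noteq> 0"
proof -
  have "((\<lambda>y. G (F y)) has_derivative (\<lambda>u. G' (F' u))) (at x)"
    using diff_chain_at[OF assms(3,4)] by (simp add: o_def)
  then have "((\<lambda>y. y) has_derivative (\<lambda>u. G' (F' u))) (at x)"
    by (rule has_derivative_transform_within_open[OF _ assms(1,2)]) (use assms(5) in auto)
  then have "(\<lambda>u. G' (F' u)) = (\<lambda>u. u)"
    using has_derivative_unique has_derivative_ident by blast
  then have "G' \<circ> F' = id"
    by (simp add: fun_eq_iff)
  then have "matrix G' ** matrix F' = mat 1"
    using matrix_compose[OF has_derivative_linear[OF assms(3)] has_derivative_linear[OF assms(4)]]
    by (simp add: matrix_id_mat_1[unfolded id_def] id_def)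
  then have "det (matrix G') * det (matrix F') = 1"
    by (metis det_I det_mul)
  then show ?thesis
    by auto
qed

lemma det_derivative_Ck_diffeo_nonzero:
  fixes h :: "real^'n \<Rightarrow> real^'n"
  assumes "Ck_diffeo L h U V" "1 \<le> L" "open U" "x \<in> U" "(h has_derivative h') (at x)"
  shows "det (matrix h') \<noteq> 0"
proof -
  obtain g where "h ` U \<subseteq> V" "\<forall>y\<in>U. g (h y) = y" "Ck_on L g V"
    using assms(1) unfolding Ck_diffeo_def by blast
  then obtain g' where "(g has_derivative g') (at (h x))"
    using Ck_on_imp_differentiable assms(2,4) unfolding differentiable_def by blast
  then show ?thesis
    using det_derivative_nonzero_of_left_inverse[OF assms(3,4,5)] \<open>\<forall>y\<in>U. g (h y) = y\<close> by blast
qed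

lemma Ck_diffeo_inverse_lipschitz_cball:
  fixes h :: "'a::euclidean_space \<Rightarrow> 'b::euclidean_space"
  assumes "Ck_diffeo L h U V" "1 \<le> L" "open U" "open V" "a0 \<in> U"
  obtains s R where "s > 0" "cball a0 s \<subseteq> U" "R \<ge> 1"
    "\<forall>a\<in>cball a0 s. \<forall>b\<in>cball a0 s. norm (a - b) \<le> R * norm (h a - h b)"
proof -
  obtain g where hg: "h ` U \<subseteq> V" "\<forall>x\<in>U. g (h x) = x" "Ck_on L h U" "Ck_on L g V"
    using assms(1) unfolding Ck_diffeo_def by blast
  obtain t where "t > 0" "cball (h a0) t \<subseteq> V"
    using hg(1) assms(4,5) open_contains_cball by blast
  then obtain R where "R \<ge> 1" and R: "\<forall>x\<in>cball (h a0) t. \<forall>y\<in>cball (h a0) t. norm (g x - g y) \<le> R * norm (x - y)"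
    using Ck_on_lipschitz_on_convex[OF hg(4) assms(2) compact_cball convex_cball] by blast
  have "open (h -` ball (h a0) t \<inter> U)"
    using open_vimage_Ck_on[OF assms(3) hg(3) open_ball] .
  moreover have "a0 \<in> h -` ball (h a0) t \<inter> U"
    using assms(5) \<open>t > 0\<close> by simp
  ultimately obtain s where "s > 0" "cball a0 s \<subseteq> h -` ball (h a0) t \<inter> U"
    using open_contains_cball by blast
  moreover have "norm (a - b) \<le> R * norm (h a - h b)"
    if "a \<in> U" "b \<in> U" "h a \<in> ball (h a0) t" "h b \<in> ball (h a0) t" for a b
  proof -
    have "h a \<in> cball (h a0) t" "h b \<in> cball (h a0) t"
      using that(3,4) by auto
    then have "norm (g (h a) - g (h b)) \<le> R * norm (h a - h b)"
      using R by blast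
    then show ?thesis
      using hg(2) that(1,2) by simp
  qed
  ultimately show thesis
    using that[of s R] \<open>R \<ge> 1\<close> by blast
qed

section \<open>Matrices and compactness\<close>

lemma jacobian_eq_matrix:
  assumes "(F has_derivative F') (at x)"
  shows "jacobian F (at x) = matrix F'"
  unfolding jacobian_def using frechet_derivative_at[OF assms] by simp

lemma norm_matrix_le:
  fixes F :: "real^'k \<Rightarrow> real^'m"
  assumes "\<forall>u. norm (F u) \<le> B * norm u"
  shows "norm (matrix F) \<le> real CARD('m) * real CARD('k) * B"
proof -
  have "norm (matrix F) \<le> (\<Sum>i\<in>UNIV. norm (matrix F $ i))"
    by (simp add: norm_vec_def L2_set_le_sum)
  also have "\<dots> \<le> (\<Sum>i\<in>(UNIV::'m set). \<Sum>j\<in>(UNIV::'k set). B)"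
  proof (rule sum_mono)
    fix i
    have "\<bar>matrix F $ i $ j\<bar> \<le> B" for j
      using component_le_norm_cart[of "F (axis j 1)" i] assms[rule_format, of "axis j 1"]
      by (simp add: matrix_def)
    then have "(\<Sum>j\<in>UNIV. \<bar>matrix F $ i $ j\<bar>) \<le> (\<Sum>j\<in>(UNIV::'k set). B)"
      by (intro sum_mono)
    then show "norm (matrix F $ i) \<le> (\<Sum>j\<in>(UNIV::'k set). B)"
      using norm_le_l1_cart[of "matrix F $ i"] by linarith
  qed
  also have "\<dots> = real CARD('m) * real CARD('k) * B"
    by simp
  finally show ?thesis .
qed

lemma matrix_scaleR_fun: "matrix (\<lambda>u. r *\<^sub>R f u) = r *\<^sub>R matrix f"
  by (simp add: matrix_def vec_eq_iff)

lemma matrix_add_fun: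
  "matrix (\<lambda>u. f u + g u) = matrix f + (matrix g :: real^'n^'m)"
  by (simp add: matrix_def vec_eq_iff)

lemma compact_image_matrix_derivative:
  assumes "\<forall>v. continuous_on S (\<lambda>x. f' x v)" "compact K" "K \<subseteq> S"
  shows "compact ((\<lambda>x. matrix (f' x) :: real^'n^'m) ` K)"
proof (rule compact_continuous_image[OF _ assms(2)])
  show "continuous_on K (\<lambda>x. matrix (f' x) :: real^'n^'m)"
    unfolding matrix_def using assms(1,3)
    by (intro continuous_on_vec_lambda continuous_on_component) (auto intro: continuous_on_subset)
qed

lemma det_scaleR:
  fixes A :: "real^'n^'n"
  shows "det (r *\<^sub>R A) = r ^ CARD('n) * det A"
proof -
  have "r *\<^sub>R A = (r *\<^sub>R mat 1) ** A"
    by (metis scalar_matrix_assoc matrix_mul_lid)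
  moreover have "r *\<^sub>R mat 1 = (mat r :: real^'n^'n)"
    by (simp add: vec_eq_iff mat_def)
  moreover have "det (mat r :: real^'n^'n) = r ^ CARD('n)"
    using det_matrix_scaleR[of r] by (simp add: matrix_scaleR)
  ultimately show ?thesis
    by (simp add: det_mul)
qed

lemma det_nonzero_iff_kernel:
  fixes A :: "real^'n^'n"
  shows "det A \<noteq> 0 \<longleftrightarrow> (\<forall>x. A *v x = 0 \<longrightarrow> x = 0)"
  by (simp add: invertible_det_nz[symmetric] invertible_left_inverse matrix_left_invertible_ker)

lemma det_nonzero_iff_left_kernel:
  fixes A :: "real^'n^'n"
  shows "det A \<noteq> 0 \<longleftrightarrow> (\<forall>x. x v* A = 0 \<longrightarrow> x = 0)"
  using det_nonzero_iff_kernel[of "transpose A"] by simp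

lemma det_gram_nonzero_iff:
  fixes A :: "real^'k^'m"
  shows "det (A ** transpose A) \<noteq> 0 \<longleftrightarrow> (\<forall>y. y v* A = 0 \<longrightarrow> y = 0)"
proof -
  have "(A ** transpose A) *v y = A *v (y v* A)" for y
    by (simp flip: matrix_vector_mul_assoc)
  moreover have "y v* A = 0" if "A *v (y v* A) = 0" for y
  proof -
    have "inner (y v* A) (y v* A) = 0"
      using that by (simp add: dot_lmul_matrix)
    then show ?thesis
      by simp
  qed
  ultimately have "(A ** transpose A) *v y = 0 \<longleftrightarrow> y v* A = 0" for y
    by auto
  then show ?thesis
    by (simp add: det_nonzero_iff_kernel)
qed

lemma det_gram_mult_nonzero:
  fixes H :: "real^'m^'m" and D :: "real^'k^'m" and J :: "real^'k^'k"
  assumes "det H \<noteq> 0" "det J \<noteq> 0" "det (D ** transpose D) \<noteq> 0"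
  shows "det ((H ** D ** J) ** transpose (H ** D ** J)) \<noteq> 0"
  unfolding det_gram_nonzero_iff
proof (intro allI impI)
  fix y
  assume "y v* (H ** D ** J) = 0"
  then have "((y v* H) v* D) v* J = 0"
    by (simp add: vector_matrix_mul_assoc)
  then have "(y v* H) v* D = 0"
    using assms(2) by (simp add: det_nonzero_iff_left_kernel)
  then have "y v* H = 0"
    using assms(3) by (simp add: det_gram_nonzero_iff)
  then show "y = 0"
    using assms(1) by (simp add: det_nonzero_iff_left_kernel)
qed

lemma det_gram_scaleR:
  fixes A :: "real^'k^'m"
  shows "det ((r *\<^sub>R A) ** transpose (r *\<^sub>R A)) = (r\<^sup>2) ^ CARD('m) * det (A ** transpose A)"
proof -
  have "(r *\<^sub>R A) ** transpose (r *\<^sub>R A) = r\<^sup>2 *\<^sub>R (A ** transpose A)"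
    by (simp add: transpose_scalar matrix_scalar_ac power2_eq_square flip: scalar_matrix_assoc)
  then show ?thesis
    by (simp add: det_scaleR)
qed

lemma continuous_on_matrix_mult [continuous_intros]:
  fixes A :: "'a::topological_space \<Rightarrow> real^'n^'m" and B :: "'a \<Rightarrow> real^'p^'n"
  assumes "continuous_on S A" "continuous_on S B"
  shows "continuous_on S (\<lambda>x. A x ** B x)"
  unfolding matrix_matrix_mult_def using assms by (intro continuous_intros)

lemma continuous_on_transpose [continuous_intros]:
  fixes A :: "'a::topological_space \<Rightarrow> real^'n^'m"
  assumes "continuous_on S A"
  shows "continuous_on S (\<lambda>x. transpose (A x))"
  unfolding transpose_def using assms by (intro continuous_intros)

lemma continuous_on_det [continuous_intros]:
  fixes A :: "'a::topological_space \<Rightarrow> real^'n^'n"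
  assumes "continuous_on S A"
  shows "continuous_on S (\<lambda>x. det (A x))"
  unfolding det_def using assms by (intro continuous_intros)

lemma open_contains_cball_Times:
  assumes "open S" "(x, y) \<in> S"
  obtains e where "e > 0" "cball x e \<times> cball y e \<subseteq> S"
proof -
  obtain e where "e > 0" "cball (x, y) e \<subseteq> S"
    using assms open_contains_cball by blast
  moreover have "cball x (e / 2) \<times> cball y (e / 2) \<subseteq> cball (x, y) e"
  proof clarify
    fix a b
    assume "a \<in> cball x (e / 2)" "b \<in> cball y (e / 2)"
    then have "\<bar>dist x a\<bar> + \<bar>dist y b\<bar> \<le> e"
      by simp
    then show "(a, b) \<in> cball (x, y) e"
      using sqrt_sum_squares_le_sum_abs[of "dist x a" "dist y b"] by (simp add: dist_Pair_Pair)
  qed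
  ultimately show thesis
    using that[of "e / 2"] by auto
qed

lemma compact_positive_imp_uniform_lower_bound:
  fixes F :: "'a::metric_space \<Rightarrow> real"
  assumes "compact K" "continuous_on UNIV F" "\<forall>z\<in>K. 0 < F z"
  shows "\<exists>\<mu>>0. \<exists>\<delta>>0. \<forall>z\<in>K. \<forall>z'. dist z z' < \<delta> \<longrightarrow> \<mu> \<le> F z'"
proof (cases "K = {}")
  case False
  then obtain z0 where "z0 \<in> K" and min: "\<forall>z\<in>K. F z0 \<le> F z"
    using continuous_attains_inf[OF assms(1) False continuous_on_subset[OF assms(2)]] by blast
  define \<mu> where "\<mu> = F z0 / 2"
  have "\<mu> > 0"
    unfolding \<mu>_def using assms(3) \<open>z0 \<in> K\<close> by simp
  have "K \<subseteq> {z. \<mu> < F z}"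
    using min \<open>\<mu> > 0\<close> unfolding \<mu>_def by auto
  moreover have "open {z. \<mu> < F z}"
    using open_Collect_less[OF continuous_on_const assms(2)] .
  ultimately obtain \<delta> where "\<delta> > 0" "(\<Union>z\<in>K. ball z \<delta>) \<subseteq> {z. \<mu> < F z}"
    using compact_subset_open_imp_ball_epsilon_subset[OF assms(1)] by blast
  then have "\<forall>z\<in>K. \<forall>z'. dist z z' < \<delta> \<longrightarrow> \<mu> \<le> F z'"
    by fastforce
  with \<open>\<mu> > 0\<close> \<open>\<delta> > 0\<close> show ?thesis
    by blast
qed (auto intro!: exI[of _ "1::real"])

lemma gram_det_uniform_lower_bound:
  fixes HS :: "(real^'m^'m) set" and JS :: "(real^'k^'k) set"
  assumes "compact HS" "\<forall>H\<in>HS. det H \<noteq> 0" "compact JS" "\<forall>J\<in>JS. det J \<noteq> 0" "0 < c"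
  shows "\<exists>\<mu>>0. \<exists>\<delta>>0. \<forall>H\<in>HS. \<forall>J\<in>JS. \<forall>D E :: real^'k^'m.
    norm D \<le> M \<longrightarrow> c \<le> \<bar>det (D ** transpose D)\<bar> \<longrightarrow> norm E < \<delta> \<longrightarrow>
    \<mu> \<le> \<bar>det (((H ** D + E) ** J) ** transpose ((H ** D + E) ** J))\<bar>"
proof -
  define DS where "DS = {D :: real^'k^'m. norm D \<le> M \<and> c \<le> \<bar>det (D ** transpose D)\<bar>}"
  define F where "F = (\<lambda>(H :: real^'m^'m, D :: real^'k^'m, J :: real^'k^'k, E :: real^'k^'m). \<bar>det (((H ** D + E) ** J) ** transpose ((H ** D + E) ** J))\<bar>)"
  have "bounded DS"
    unfolding DS_def bounded_iff by blast
  moreover have "closed DS"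
    unfolding DS_def by (intro closed_Collect_conj closed_Collect_le continuous_intros)
  ultimately have "compact (HS \<times> DS \<times> JS \<times> {0})"
    using assms(1,3) by (intro compact_Times compact_sing) (simp_all add: compact_eq_bounded_closed)
  moreover have "continuous_on UNIV F"
    unfolding F_def case_prod_unfold by (intro continuous_intros)
  moreover have "0 < F (H, D, J, 0)" if "H \<in> HS" "D \<in> DS" "J \<in> JS" for H D J
  proof -
    have "det (D ** transpose D) \<noteq> 0"
      using that(2) assms(5) unfolding DS_def by auto
    then show ?thesis
      using det_gram_mult_nonzero[of H J D] that(1,3) assms(2,4) unfolding F_def by auto
  qed
  ultimately obtain \<mu> \<delta> where "\<mu> > 0" "\<delta> > 0"
    and \<mu>: "\<forall>z\<in>HS \<times> DS \<times> JS \<times> {0}. \<forall>z'. dist z z' < \<delta> \<longrightarrow> \<mu> \<le> F z'"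
    using compact_positive_imp_uniform_lower_bound[of "HS \<times> DS \<times> JS \<times> {0}" F] by blast
  have "\<mu> \<le> F (H, D, J, E)" if "H \<in> HS" "J \<in> JS" "D \<in> DS" "norm E < \<delta>" for H J D E
    using \<mu>[rule_format, of "(H, D, J, 0)" "(H, D, J, E)"] that by (simp add: dist_Pair_Pair dist_norm)
  then show ?thesis
    using \<open>\<mu> > 0\<close> \<open>\<delta> > 0\<close> unfolding DS_def F_def by (intro exI[of _ \<mu>] conjI exI[of _ \<delta>]) auto
qed

section \<open>Transversality\<close>

definition gram_Phi :: "((real^'k) \<times> (real^'n) \<Rightarrow> real^'m) \<Rightarrow> real^'k \<Rightarrow> real^'n \<Rightarrow> real^'n \<Rightarrow> real" where
  "gram_Phi P l v w =
     \<bar>det (jacobian (\<lambda>l'. Phi P l' v w) (at l) ** transpose (jacobian (\<lambda>l'. Phi P l' v w) (at l)))\<bar>"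

lemma transversal_on_iff:
  "transversal_on P A B \<longleftrightarrow>
     (\<exists>C>0. \<forall>l\<in>A. \<forall>v\<in>B. \<forall>w\<in>B. v \<noteq> w \<longrightarrow> norm (Phi P l v w) \<le> C \<longrightarrow> C\<^sup>2 \<le> gram_Phi P l v w)"
  unfolding transversal_on_def gram_Phi_def ..

lemma transversal_on_subset:
  "transversal_on P A B \<Longrightarrow> A' \<subseteq> A \<Longrightarrow> B' \<subseteq> B \<Longrightarrow> transversal_on P A' B'"
  unfolding transversal_on_def by blast

lemma locally_transversal_onE_cball:
  assumes "locally_transversal_on P \<Lambda> \<Omega>" "l \<in> \<Lambda>" "w \<in> \<Omega>"
  obtains \<rho> where "\<rho> > 0" "cball l \<rho> \<subseteq> \<Lambda>" "cball w \<rho> \<subseteq> \<Omega>" "transversal_on P (cball l \<rho>) (cball w \<rho>)"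
proof -
  have "\<exists>A B. open A \<and> open B \<and> (l, w) \<in> A \<times> B \<and> A \<subseteq> \<Lambda> \<and> B \<subseteq> \<Omega> \<and> transversal_on P A B"
    using assms unfolding locally_transversal_on_def by simp
  then obtain A B where AB: "open (A \<times> B)" "(l, w) \<in> A \<times> B" "A \<subseteq> \<Lambda>" "B \<subseteq> \<Omega>" "transversal_on P A B"
    by (blast intro: open_Times)
  obtain \<rho> where "\<rho> > 0" "cball l \<rho> \<times> cball w \<rho> \<subseteq> A \<times> B"
    using open_contains_cball_Times[OF AB(1,2)] by blast
  moreover have "l \<in> cball l \<rho>" "w \<in> cball w \<rho>"
    using \<open>\<rho> > 0\<close> by simp_all
  ultimately have "cball l \<rho> \<subseteq> A" "cball w \<rho> \<subseteq> B"
    by blast+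
  with AB(3-5) \<open>\<rho> > 0\<close> show thesis
    using that transversal_on_subset by blast
qed

lemma has_derivative_Phi:
  fixes P :: "(real^'k) \<times> (real^'n) \<Rightarrow> real^'m"
  assumes "(P has_derivative P1) (at (l, v))" "(P has_derivative P2) (at (l, w))"
  shows "((\<lambda>l'. Phi P l' v w) has_derivative (\<lambda>u. (1 / norm (v - w)) *\<^sub>R (P1 (u, 0) - P2 (u, 0)))) (at l)"
proof -
  have "((\<lambda>l'. P (l', x)) has_derivative (\<lambda>u. P' (u, 0))) (at l)"
    if "(P has_derivative P') (at (l, x))" for P' x
    using diff_chain_at[OF has_derivative_Pair[OF has_derivative_ident has_derivative_const] that]
    by (simp add: o_def)
  then show ?thesis
    unfolding Phi_def using assms by (intro has_derivative_scaleR_right has_derivative_diff) auto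
qed

lemma jacobian_Phi_compose:
  fixes P :: "(real^'k) \<times> (real^'n) \<Rightarrow> real^'m" and h :: "real^'m \<Rightarrow> real^'p"
  assumes "(P has_derivative P1) (at (l, v))" "(P has_derivative P2) (at (l, w))"
    and "(h has_derivative h1) (at (P (l, v)))" "(h has_derivative h2) (at (P (l, w)))"
  shows "jacobian (\<lambda>l'. Phi (\<lambda>z. h (P z)) l' v w) (at l)
    = matrix h1 ** jacobian (\<lambda>l'. Phi P l' v w) (at l)
      + matrix (\<lambda>u. (1 / norm (v - w)) *\<^sub>R (h1 (P2 (u, 0)) - h2 (P2 (u, 0))))"
proof -
  define D where "D = (\<lambda>u. (1 / norm (v - w)) *\<^sub>R (P1 (u, 0) - P2 (u, 0)))"
  define E where "E = (\<lambda>u. (1 / norm (v - w)) *\<^sub>R (h1 (P2 (u, 0)) - h2 (P2 (u, 0))))"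
  have D: "((\<lambda>l'. Phi P l' v w) has_derivative D) (at l)"
    unfolding D_def using assms(1,2) by (rule has_derivative_Phi)
  have "((\<lambda>l'. Phi (\<lambda>z. h (P z)) l' v w) has_derivative
      (\<lambda>u. (1 / norm (v - w)) *\<^sub>R (h1 (P1 (u, 0)) - h2 (P2 (u, 0))))) (at l)"
    using has_derivative_Phi[OF diff_chain_at[OF assms(1,3)] diff_chain_at[OF assms(2,4)]]
    by (simp add: o_def)
  moreover have "h1 (D u) + E u = (1 / norm (v - w)) *\<^sub>R (h1 (P1 (u, 0)) - h2 (P2 (u, 0)))" for u
    using has_derivative_linear[OF assms(3)] unfolding D_def E_def
    by (simp add: linear_cmul linear_diff algebra_simps)
  ultimately have "jacobian (\<lambda>l'. Phi (\<lambda>z. h (P z)) l' v w) (at l) = matrix (\<lambda>u. h1 (D u) + E u)"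
    by (simp add: jacobian_eq_matrix)
  also have "\<dots> = matrix h1 ** matrix D + matrix E"
    using matrix_compose[OF has_derivative_linear[OF D] has_derivative_linear[OF assms(3)]]
    by (simp add: matrix_add_fun o_def)
  finally show ?thesis
    using D unfolding E_def by (simp add: jacobian_eq_matrix)
qed

lemma gram_Phi_scaleR:
  fixes P Q :: "(real^'k) \<times> (real^'n) \<Rightarrow> real^'m"
  assumes "open A" "l \<in> A" "\<forall>l'\<in>A. Phi Q l' v' w' = r *\<^sub>R Phi P l' v w"
    and "P differentiable (at (l, v))" "P differentiable (at (l, w))"
  shows "gram_Phi Q l v' w' = (r\<^sup>2) ^ CARD('m) * gram_Phi P l v w"
proof -
  obtain P1 P2 where "(P has_derivative P1) (at (l, v))" "(P has_derivative P2) (at (l, w))"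
    using assms(4,5) unfolding differentiable_def by (elim exE)
  define D where "D = (\<lambda>u. (1 / norm (v - w)) *\<^sub>R (P1 (u, 0) - P2 (u, 0)))"
  have D: "((\<lambda>l'. Phi P l' v w) has_derivative D) (at l)"
    unfolding D_def using \<open>(P has_derivative P1) (at (l, v))\<close> \<open>(P has_derivative P2) (at (l, w))\<close>
    by (rule has_derivative_Phi)
  have "((\<lambda>l'. Phi Q l' v' w') has_derivative (\<lambda>u. r *\<^sub>R D u)) (at l)"
    by (rule has_derivative_transform_within_open[OF has_derivative_scaleR_right[OF D] assms(1,2)])
      (simp add: assms(3))
  then show ?thesis
    using D unfolding gram_Phi_def
    by (simp add: jacobian_eq_matrix matrix_scaleR_fun det_gram_scaleR abs_mult)
qed

lemma jacobian_Phi_reparametrize: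
  fixes P Q :: "(real^'k) \<times> (real^'n) \<Rightarrow> real^'m" and fi :: "real^'k \<Rightarrow> real^'k"
  assumes "open A" "l \<in> A" "\<forall>l'\<in>A. Phi Q l' v w = Phi P (fi l') v w" "(fi has_derivative fi') (at l)"
    and "P differentiable (at (fi l, v))" "P differentiable (at (fi l, w))"
  shows "jacobian (\<lambda>l'. Phi Q l' v w) (at l) = jacobian (\<lambda>l'. Phi P l' v w) (at (fi l)) ** matrix fi'"
proof -
  obtain P1 P2 where "(P has_derivative P1) (at (fi l, v))" "(P has_derivative P2) (at (fi l, w))"
    using assms(5,6) unfolding differentiable_def by (elim exE)
  then have D: "((\<lambda>l'. Phi P l' v w) has_derivative (\<lambda>u. (1 / norm (v - w)) *\<^sub>R (P1 (u, 0) - P2 (u, 0)))) (at (fi l))"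
    by (rule has_derivative_Phi)
  have "((\<lambda>l'. Phi Q l' v w) has_derivative (\<lambda>u. (1 / norm (v - w)) *\<^sub>R (P1 (fi' u, 0) - P2 (fi' u, 0)))) (at l)"
  proof (rule has_derivative_transform_within_open[OF _ assms(1,2)])
    show "((\<lambda>l'. Phi P (fi l') v w) has_derivative (\<lambda>u. (1 / norm (v - w)) *\<^sub>R (P1 (fi' u, 0) - P2 (fi' u, 0)))) (at l)"
      using diff_chain_at[OF assms(4) D] by (simp add: o_def)
  qed (simp add: assms(3))
  moreover have "matrix (\<lambda>u. (1 / norm (v - w)) *\<^sub>R (P1 (fi' u, 0) - P2 (fi' u, 0)))
      = matrix (\<lambda>u. (1 / norm (v - w)) *\<^sub>R (P1 (u, 0) - P2 (u, 0))) ** matrix fi'"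
    using matrix_compose[OF has_derivative_linear[OF assms(4)] has_derivative_linear[OF D]]
    by (simp add: o_def)
  ultimately show ?thesis
    using D by (simp add: jacobian_eq_matrix)
qed

lemma norm_jacobian_Phi_le:
  fixes P :: "(real^'k) \<times> (real^'n) \<Rightarrow> real^'m"
  assumes "\<forall>z\<in>S. (P has_derivative P' z) (at z)" "\<forall>u. Ck_on 1 (\<lambda>z. P' z u) S"
    and "compact A" "convex A" "compact B" "convex B" "A \<times> B \<subseteq> S"
  shows "\<exists>M. \<forall>l\<in>A. \<forall>v\<in>B. \<forall>w\<in>B. v \<noteq> w \<longrightarrow> norm (jacobian (\<lambda>l'. Phi P l' v w) (at l)) \<le> M"
proof -
  have "\<exists>K\<ge>0. \<forall>x\<in>A \<times> B. \<forall>y\<in>A \<times> B. \<forall>u. norm (P' x u - P' y u) \<le> K * norm (x - y) * norm u"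
    using assms(3-7) by (intro derivative_lipschitz_on_convex[OF assms(1,2)] compact_Times convex_Times)
  then obtain K where K: "\<forall>x\<in>A \<times> B. \<forall>y\<in>A \<times> B. \<forall>u. norm (P' x u - P' y u) \<le> K * norm (x - y) * norm u"
    by blast
  have "norm (jacobian (\<lambda>l'. Phi P l' v w) (at l)) \<le> real CARD('m) * real CARD('k) * K"
    if "l \<in> A" "v \<in> B" "w \<in> B" "v \<noteq> w" for l v w
  proof -
    have "(l, v) \<in> S" "(l, w) \<in> S"
      using that assms(7) by auto
    then have "jacobian (\<lambda>l'. Phi P l' v w) (at l)
        = matrix (\<lambda>u. (1 / norm (v - w)) *\<^sub>R (P' (l, v) (u, 0) - P' (l, w) (u, 0)))"
      using assms(1) by (simp add: jacobian_eq_matrix has_derivative_Phi)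
    moreover have "norm (matrix (\<lambda>u. (1 / norm (v - w)) *\<^sub>R (P' (l, v) (u, 0) - P' (l, w) (u, 0))))
        \<le> real CARD('m) * real CARD('k) * K"
    proof (rule norm_matrix_le, intro allI)
      fix u
      have "norm (P' (l, v) (u, 0) - P' (l, w) (u, 0)) \<le> K * norm u * norm (v - w)"
        using K[rule_format, of "(l, v)" "(l, w)" "(u, 0)"] that by (simp add: norm_Pair mult_ac)
      then show "norm ((1 / norm (v - w)) *\<^sub>R (P' (l, v) (u, 0) - P' (l, w) (u, 0))) \<le> K * norm u"
        using that(4) by (simp add: divide_le_eq)
    qed
    ultimately show ?thesis
      by simp
  qed
  then show ?thesis
    by blast
qed

lemma transversal_on_reparametrize_fibre:
  fixes P Pt :: "(real^'k) \<times> (real^'n) \<Rightarrow> real^'m" and g gi :: "real^'n \<Rightarrow> real^'n"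
  assumes "transversal_on P A B" "open A" "\<forall>l\<in>A. \<forall>w\<in>B. P differentiable (at (l, w))"
    and "gi ` Bt \<subseteq> B" "\<forall>y\<in>Bt. g (gi y) = y"
    and "1 \<le> M" "\<forall>x\<in>B. \<forall>y\<in>B. norm (g x - g y) \<le> M * norm (x - y)"
    and "\<forall>l\<in>A. \<forall>w\<in>Bt. Pt (l, w) = P (l, gi w)"
  shows "transversal_on Pt A Bt"
proof -
  obtain C where "C > 0" and C: "\<forall>l\<in>A. \<forall>v\<in>B. \<forall>w\<in>B. v \<noteq> w \<longrightarrow> norm (Phi P l v w) \<le> C \<longrightarrow> C\<^sup>2 \<le> gram_Phi P l v w"
    using assms(1) unfolding transversal_on_iff by blast
  define c where "c = C / M ^ CARD('m)"
  have "M \<le> M ^ CARD('m)" "0 < M ^ CARD('m)"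
    using assms(6) by (simp_all add: power_increasing[of 1 "CARD('m)" M, simplified])
  then have "c * M \<le> C" "c > 0"
    unfolding c_def using mult_left_mono[of M "M ^ CARD('m)" C] \<open>C > 0\<close>
    by (simp_all add: divide_le_eq)
  have "c\<^sup>2 \<le> gram_Phi Pt l vt wt"
    if "l \<in> A" "vt \<in> Bt" "wt \<in> Bt" "vt \<noteq> wt" "norm (Phi Pt l vt wt) \<le> c" for l vt wt
  proof -
    define v w where "v = gi vt" and "w = gi wt"
    have "v \<in> B" "w \<in> B" "g v = vt" "g w = wt"
      using that(2,3) assms(4,5) unfolding v_def w_def by auto
    then have "v \<noteq> w"
      using that(4) by auto
    define r where "r = norm (v - w) / norm (vt - wt)"
    have "norm (g v - g w) \<le> M * norm (v - w)"
      using assms(7) \<open>v \<in> B\<close> \<open>w \<in> B\<close> by blast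
    then have "norm (vt - wt) \<le> M * norm (v - w)"
      using \<open>g v = vt\<close> \<open>g w = wt\<close> by simp
    then have "1 / M \<le> r" "r > 0"
      unfolding r_def using \<open>v \<noteq> w\<close> that(4) assms(6) by (simp_all add: field_simps)
    have "r * (1 / norm (v - w)) = 1 / norm (vt - wt)"
      unfolding r_def using \<open>v \<noteq> w\<close> by simp
    moreover have "Pt (l', vt) = P (l', v)" "Pt (l', wt) = P (l', w)" if "l' \<in> A" for l'
      using assms(8) that \<open>vt \<in> Bt\<close> \<open>wt \<in> Bt\<close> unfolding v_def w_def by auto
    ultimately have Phi_eq: "Phi Pt l' vt wt = r *\<^sub>R Phi P l' v w" if "l' \<in> A" for l'
      using that unfolding Phi_def by (simp only: scaleR_scaleR)
    have "norm (Phi P l v w) \<le> c * M"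
    proof -
      have "r * norm (Phi P l v w) \<le> c"
        using Phi_eq[OF that(1)] that(5) \<open>r > 0\<close> by simp
      then have "norm (Phi P l v w) \<le> c / r"
        using \<open>r > 0\<close> by (simp add: field_simps)
      also have "\<dots> \<le> c * M"
      proof -
        have "1 \<le> M * r"
          using \<open>1 / M \<le> r\<close> assms(6) by (simp add: field_simps)
        then have "c \<le> c * M * r"
          using \<open>c > 0\<close> by (simp add: mult.assoc mult_le_cancel_left1)
        then show ?thesis
          using \<open>r > 0\<close> by (simp add: divide_le_eq)
      qed
      finally show ?thesis .
    qed
    then have "C\<^sup>2 \<le> gram_Phi P l v w"
      using C that(1) \<open>v \<in> B\<close> \<open>w \<in> B\<close> \<open>v \<noteq> w\<close> \<open>c * M \<le> C\<close> by auto
    have "gram_Phi Pt l vt wt = (r\<^sup>2) ^ CARD('m) * gram_Phi P l v w"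
      using assms(2,3) that(1) \<open>v \<in> B\<close> \<open>w \<in> B\<close> Phi_eq by (intro gram_Phi_scaleR) auto
    have "c\<^sup>2 \<le> (r\<^sup>2) ^ CARD('m) * C\<^sup>2"
    proof -
      have "(M ^ CARD('m))\<^sup>2 = (M\<^sup>2) ^ CARD('m)"
        by (metis power_mult mult.commute)
      then have "c\<^sup>2 = ((1 / M)\<^sup>2) ^ CARD('m) * C\<^sup>2"
        unfolding c_def by (simp add: power_divide power_one_over)
      also have "\<dots> \<le> (r\<^sup>2) ^ CARD('m) * C\<^sup>2"
        using \<open>1 / M \<le> r\<close> assms(6) by (intro mult_right_mono power_mono) auto
      finally show ?thesis .
    qed
    also have "\<dots> \<le> (r\<^sup>2) ^ CARD('m) * gram_Phi P l v w"
      using \<open>C\<^sup>2 \<le> gram_Phi P l v w\<close> by (intro mult_left_mono) auto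
    finally show ?thesis
      by (simp add: \<open>gram_Phi Pt l vt wt = (r\<^sup>2) ^ CARD('m) * gram_Phi P l v w\<close>)
  qed
  then show ?thesis
    unfolding transversal_on_iff using \<open>c > 0\<close> by blast
qed

lemma locally_transversal_on_reparametrize_fibre:
  fixes P Pt :: "(real^'k) \<times> (real^'n) \<Rightarrow> real^'m" and gi :: "real^'n \<Rightarrow> real^'n"
  assumes "open \<Lambda>" "open \<Omega>t" "locally_transversal_on P \<Lambda> \<Omega>" "\<forall>z\<in>\<Lambda> \<times> \<Omega>. P differentiable (at z)"
    and "Ck_diffeo 1 gi \<Omega>t \<Omega>" "\<forall>l\<in>\<Lambda>. \<forall>w\<in>\<Omega>t. Pt (l, w) = P (l, gi w)"
  shows "locally_transversal_on Pt \<Lambda> \<Omega>t"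
  unfolding locally_transversal_on_def
proof (intro ballI)
  fix p
  assume "p \<in> \<Lambda> \<times> \<Omega>t"
  then obtain l0 wt0 where p: "p = (l0, wt0)" "l0 \<in> \<Lambda>" "wt0 \<in> \<Omega>t"
    by blast
  obtain g where gi: "gi ` \<Omega>t \<subseteq> \<Omega>" "\<forall>y\<in>\<Omega>t. g (gi y) = y" "Ck_on 1 gi \<Omega>t" "Ck_on 1 g \<Omega>"
    using assms(5) unfolding Ck_diffeo_def by blast
  define w0 where "w0 = gi wt0"
  have "w0 \<in> \<Omega>"
    using gi(1) p(3) unfolding w0_def by blast
  then obtain \<rho> where "\<rho> > 0" "cball l0 \<rho> \<subseteq> \<Lambda>" "cball w0 \<rho> \<subseteq> \<Omega>"
    and trans: "transversal_on P (cball l0 \<rho>) (cball w0 \<rho>)"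
    using locally_transversal_onE_cball[OF assms(3) p(2)] by metis
  obtain M where "M \<ge> 1" "\<forall>x\<in>cball w0 \<rho>. \<forall>y\<in>cball w0 \<rho>. norm (g x - g y) \<le> M * norm (x - y)"
    using Ck_on_lipschitz_on_convex[OF gi(4) order_refl compact_cball convex_cball \<open>cball w0 \<rho> \<subseteq> \<Omega>\<close>]
    by blast
  have "ball l0 \<rho> \<subseteq> \<Lambda>"
    using \<open>cball l0 \<rho> \<subseteq> \<Lambda>\<close> ball_subset_cball by blast
  define Bt where "Bt = gi -` ball w0 \<rho> \<inter> \<Omega>t"
  have "transversal_on Pt (ball l0 \<rho>) Bt"
  proof (rule transversal_on_reparametrize_fibre)
    show "transversal_on P (ball l0 \<rho>) (cball w0 \<rho>)"
      using trans by (rule transversal_on_subset) auto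
    show "\<forall>l\<in>ball l0 \<rho>. \<forall>w\<in>cball w0 \<rho>. P differentiable (at (l, w))"
      using assms(4) \<open>ball l0 \<rho> \<subseteq> \<Lambda>\<close> \<open>cball w0 \<rho> \<subseteq> \<Omega>\<close> by blast
    show "gi ` Bt \<subseteq> cball w0 \<rho>"
      unfolding Bt_def by auto
    show "\<forall>l\<in>ball l0 \<rho>. \<forall>w\<in>Bt. Pt (l, w) = P (l, gi w)"
      using assms(6) \<open>ball l0 \<rho> \<subseteq> \<Lambda>\<close> unfolding Bt_def by blast
  qed (use gi(2) \<open>M \<ge> 1\<close> \<open>\<forall>x\<in>cball w0 \<rho>. \<forall>y\<in>cball w0 \<rho>. norm (g x - g y) \<le> M * norm (x - y)\<close>
       in \<open>auto simp: Bt_def\<close>)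
  moreover have "open Bt"
    unfolding Bt_def using open_vimage_Ck_on[OF assms(2) gi(3) open_ball] .
  moreover have "p \<in> ball l0 \<rho> \<times> Bt" "ball l0 \<rho> \<subseteq> \<Lambda>" "Bt \<subseteq> \<Omega>t"
    using p \<open>\<rho> > 0\<close> \<open>ball l0 \<rho> \<subseteq> \<Lambda>\<close> unfolding Bt_def w0_def by auto
  ultimately show "\<exists>A B. open A \<and> open B \<and> p \<in> A \<times> B \<and> A \<subseteq> \<Lambda> \<and> B \<subseteq> \<Omega>t \<and> transversal_on Pt A B"
    by blast
qed

lemma transversal_on_reparametrize_param:
  fixes P Pt :: "(real^'k) \<times> (real^'n) \<Rightarrow> real^'m" and fi :: "real^'k \<Rightarrow> real^'k"
  assumes "transversal_on P A B" "\<forall>l\<in>A. \<forall>w\<in>B. P differentiable (at (l, w))"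
    and "\<forall>l\<in>A. \<forall>v\<in>B. \<forall>w\<in>B. v \<noteq> w \<longrightarrow> norm (jacobian (\<lambda>l'. Phi P l' v w) (at l)) \<le> M"
    and "open At" "fi ` At \<subseteq> A" "\<forall>l\<in>At. (fi has_derivative fi' l) (at l)"
    and "compact JS" "\<forall>J\<in>JS. det J \<noteq> 0" "\<forall>l\<in>At. matrix (fi' l) \<in> JS"
    and "\<forall>l\<in>At. \<forall>w\<in>B. Pt (l, w) = P (fi l, w)"
  shows "transversal_on Pt At B"
proof -
  obtain C where "C > 0" and C: "\<forall>l\<in>A. \<forall>v\<in>B. \<forall>w\<in>B. v \<noteq> w \<longrightarrow> norm (Phi P l v w) \<le> C \<longrightarrow> C\<^sup>2 \<le> gram_Phi P l v w"
    using assms(1) unfolding transversal_on_iff by blast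
  have "\<exists>\<mu>>0. \<exists>\<delta>>0. \<forall>H\<in>{mat 1}. \<forall>J\<in>JS. \<forall>D E :: real^'k^'m.
      norm D \<le> M \<longrightarrow> C\<^sup>2 \<le> \<bar>det (D ** transpose D)\<bar> \<longrightarrow> norm E < \<delta> \<longrightarrow>
      \<mu> \<le> \<bar>det (((H ** D + E) ** J) ** transpose ((H ** D + E) ** J))\<bar>"
    using assms(7,8) \<open>C > 0\<close> by (intro gram_det_uniform_lower_bound) auto
  then obtain \<mu> \<delta> where "\<mu> > 0" "\<delta> > 0" and \<mu>0: "\<forall>H\<in>{mat 1}. \<forall>J\<in>JS. \<forall>D E :: real^'k^'m.
      norm D \<le> M \<longrightarrow> C\<^sup>2 \<le> \<bar>det (D ** transpose D)\<bar> \<longrightarrow> norm E < \<delta> \<longrightarrow>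
      \<mu> \<le> \<bar>det (((H ** D + E) ** J) ** transpose ((H ** D + E) ** J))\<bar>"
    by blast
  have \<mu>: "\<mu> \<le> \<bar>det ((D ** J) ** transpose (D ** J))\<bar>"
    if "J \<in> JS" "norm D \<le> M" "C\<^sup>2 \<le> \<bar>det (D ** transpose D)\<bar>" for J and D :: "real^'k^'m"
    using \<mu>0[rule_format, of "mat 1" J D 0] that \<open>\<delta> > 0\<close> by simp
  define c where "c = min C (sqrt \<mu>)"
  have "c > 0" "c \<le> C"
    unfolding c_def using \<open>C > 0\<close> \<open>\<mu> > 0\<close> by auto
  have "c\<^sup>2 \<le> (sqrt \<mu>)\<^sup>2"
    unfolding c_def using \<open>C > 0\<close> \<open>\<mu> > 0\<close> by (intro power_mono) auto
  then have "c\<^sup>2 \<le> \<mu>"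
    using \<open>\<mu> > 0\<close> by simp
  have "c\<^sup>2 \<le> gram_Phi Pt lt v w"
    if "lt \<in> At" "v \<in> B" "w \<in> B" "v \<noteq> w" "norm (Phi Pt lt v w) \<le> c" for lt v w
  proof -
    define l where "l = fi lt"
    have "l \<in> A"
      using assms(5) that(1) unfolding l_def by blast
    have Phi_eq: "Phi Pt l' v w = Phi P (fi l') v w" if "l' \<in> At" for l'
      using assms(10) that \<open>v \<in> B\<close> \<open>w \<in> B\<close> unfolding Phi_def by simp
    have "norm (Phi P l v w) \<le> C"
      using Phi_eq[OF that(1)] that(5) \<open>c \<le> C\<close> unfolding l_def by simp
    then have "C\<^sup>2 \<le> gram_Phi P l v w"
      using C \<open>l \<in> A\<close> that(2-4) by blast
    have "jacobian (\<lambda>l'. Phi Pt l' v w) (at lt) = jacobian (\<lambda>l'. Phi P l' v w) (at l) ** matrix (fi' lt)"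
      unfolding l_def using assms(2,4,6) that(1-3) \<open>l \<in> A\<close> Phi_eq
      by (intro jacobian_Phi_reparametrize) (auto simp: l_def)
    moreover have "norm (jacobian (\<lambda>l'. Phi P l' v w) (at l)) \<le> M"
      using assms(3) \<open>l \<in> A\<close> that(2-4) by blast
    ultimately have "\<mu> \<le> gram_Phi Pt lt v w"
      using \<mu> assms(9) that(1) \<open>C\<^sup>2 \<le> gram_Phi P l v w\<close> unfolding gram_Phi_def by simp
    with \<open>c\<^sup>2 \<le> \<mu>\<close> show ?thesis
      by linarith
  qed
  then show ?thesis
    unfolding transversal_on_iff using \<open>c > 0\<close> by blast
qed

lemma locally_transversal_on_reparametrize_param:
  fixes P Pt :: "(real^'k) \<times> (real^'n) \<Rightarrow> real^'m" and fi :: "real^'k \<Rightarrow> real^'k"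
  assumes "open \<Lambda>t" "locally_transversal_on P \<Lambda> \<Omega>" "Ck_on 2 P (\<Lambda> \<times> \<Omega>)"
    and "Ck_diffeo 1 fi \<Lambda>t \<Lambda>" "\<forall>l\<in>\<Lambda>t. \<forall>w\<in>\<Omega>. Pt (l, w) = P (fi l, w)"
  shows "locally_transversal_on Pt \<Lambda>t \<Omega>"
  unfolding locally_transversal_on_def
proof (intro ballI)
  fix p
  assume "p \<in> \<Lambda>t \<times> \<Omega>"
  then obtain lt0 w0 where p: "p = (lt0, w0)" "lt0 \<in> \<Lambda>t" "w0 \<in> \<Omega>"
    by blast
  have fi: "fi ` \<Lambda>t \<subseteq> \<Lambda>" "Ck_on 1 fi \<Lambda>t"
    using assms(4) unfolding Ck_diffeo_def by blast+
  define l0 where "l0 = fi lt0"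
  have "l0 \<in> \<Lambda>"
    using fi(1) p(2) unfolding l0_def by blast
  then obtain \<rho> where "\<rho> > 0" "cball l0 \<rho> \<subseteq> \<Lambda>" "cball w0 \<rho> \<subseteq> \<Omega>"
    and trans: "transversal_on P (cball l0 \<rho>) (cball w0 \<rho>)"
    using locally_transversal_onE_cball[OF assms(2) _ p(3)] by metis
  obtain P' where P': "\<forall>z\<in>\<Lambda> \<times> \<Omega>. (P has_derivative P' z) (at z)" "\<forall>u. Ck_on 1 (\<lambda>z. P' z u) (\<Lambda> \<times> \<Omega>)"
    using Ck_on_SucE[of 1 P, unfolded Suc_1, OF assms(3)] by blast
  have "\<exists>M. \<forall>l\<in>cball l0 \<rho>. \<forall>v\<in>cball w0 \<rho>. \<forall>w\<in>cball w0 \<rho>.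
      v \<noteq> w \<longrightarrow> norm (jacobian (\<lambda>l'. Phi P l' v w) (at l)) \<le> M"
    using \<open>cball l0 \<rho> \<subseteq> \<Lambda>\<close> \<open>cball w0 \<rho> \<subseteq> \<Omega>\<close>
    by (intro norm_jacobian_Phi_le[OF P']) auto
  then obtain M where M: "\<forall>l\<in>cball l0 \<rho>. \<forall>v\<in>cball w0 \<rho>. \<forall>w\<in>cball w0 \<rho>.
      v \<noteq> w \<longrightarrow> norm (jacobian (\<lambda>l'. Phi P l' v w) (at l)) \<le> M"
    by blast
  obtain fi' where fi': "\<forall>x\<in>\<Lambda>t. (fi has_derivative fi' x) (at x)" "\<forall>v. continuous_on \<Lambda>t (\<lambda>x. fi' x v)"
    using Ck_on_C1[OF fi(2) order_refl] by blast
  obtain \<sigma> where "\<sigma> > 0" "cball lt0 \<sigma> \<subseteq> \<Lambda>t"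
    using assms(1) p(2) open_contains_cball by blast
  define JS where "JS = (\<lambda>l. matrix (fi' l)) ` cball lt0 \<sigma>"
  have "\<forall>J\<in>JS. det J \<noteq> 0"
    unfolding JS_def using det_derivative_Ck_diffeo_nonzero[OF assms(4) order_refl assms(1)] fi'(1)
      \<open>cball lt0 \<sigma> \<subseteq> \<Lambda>t\<close> by blast
  define At where "At = ball lt0 \<sigma> \<inter> (fi -` ball l0 \<rho> \<inter> \<Lambda>t)"
  have "ball w0 \<rho> \<subseteq> \<Omega>"
    using \<open>cball w0 \<rho> \<subseteq> \<Omega>\<close> ball_subset_cball by blast
  have "transversal_on Pt At (ball w0 \<rho>)"
  proof (rule transversal_on_reparametrize_param)
    show "transversal_on P (cball l0 \<rho>) (ball w0 \<rho>)"
      using trans by (rule transversal_on_subset) auto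
    show "\<forall>l\<in>cball l0 \<rho>. \<forall>w\<in>ball w0 \<rho>. P differentiable (at (l, w))"
    proof (intro ballI)
      fix l w
      assume "l \<in> cball l0 \<rho>" "w \<in> ball w0 \<rho>"
      then have "(l, w) \<in> \<Lambda> \<times> \<Omega>"
        using \<open>cball l0 \<rho> \<subseteq> \<Lambda>\<close> \<open>ball w0 \<rho> \<subseteq> \<Omega>\<close> by blast
      then show "P differentiable (at (l, w))"
        using P'(1) unfolding differentiable_def by blast
    qed
    show "\<forall>l\<in>cball l0 \<rho>. \<forall>v\<in>ball w0 \<rho>. \<forall>w\<in>ball w0 \<rho>.
        v \<noteq> w \<longrightarrow> norm (jacobian (\<lambda>l'. Phi P l' v w) (at l)) \<le> M"
      using M ball_subset_cball by blast
    show "open At"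
      unfolding At_def using open_vimage_Ck_on[OF assms(1) fi(2) open_ball] by blast
    show "fi ` At \<subseteq> cball l0 \<rho>"
      unfolding At_def using ball_subset_cball by blast
    show "\<forall>l\<in>At. (fi has_derivative fi' l) (at l)"
      using fi'(1) unfolding At_def by blast
    show "compact JS"
      unfolding JS_def using fi'(2) \<open>cball lt0 \<sigma> \<subseteq> \<Lambda>t\<close> by (intro compact_image_matrix_derivative) auto
    show "\<forall>l\<in>At. matrix (fi' l) \<in> JS"
      unfolding At_def JS_def using ball_subset_cball by blast
    show "\<forall>l\<in>At. \<forall>w\<in>ball w0 \<rho>. Pt (l, w) = P (fi l, w)"
      using assms(5) \<open>ball w0 \<rho> \<subseteq> \<Omega>\<close> unfolding At_def by blast
  qed fact
  moreover have "open At"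
    unfolding At_def using open_vimage_Ck_on[OF assms(1) fi(2) open_ball] by blast
  moreover have "p \<in> At \<times> ball w0 \<rho>" "At \<subseteq> \<Lambda>t"
    using p \<open>\<rho> > 0\<close> \<open>\<sigma> > 0\<close> unfolding At_def l0_def by auto
  ultimately show "\<exists>A B. open A \<and> open B \<and> p \<in> A \<times> B \<and> A \<subseteq> \<Lambda>t \<and> B \<subseteq> \<Omega> \<and> transversal_on Pt A B"
    using \<open>ball w0 \<rho> \<subseteq> \<Omega>\<close> by blast
qed

lemma norm_matrix_difference_le:
  fixes Y :: "real^'k \<Rightarrow> real^'m" and h1 h2 :: "real^'m \<Rightarrow> real^'p"
  assumes "\<forall>u. norm (Y u) \<le> K * norm u" "\<forall>y. norm (h1 y - h2 y) \<le> N * norm y" "0 \<le> N"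
  shows "norm (matrix (\<lambda>u. t *\<^sub>R (h1 (Y u) - h2 (Y u)))) \<le> real CARD('p) * real CARD('k) * (\<bar>t\<bar> * N * K)"
proof (rule norm_matrix_le, intro allI)
  fix u
  have "norm (h1 (Y u) - h2 (Y u)) \<le> N * (K * norm u)"
    using assms order_trans mult_left_mono by blast
  then show "norm (t *\<^sub>R (h1 (Y u) - h2 (Y u))) \<le> \<bar>t\<bar> * N * K * norm u"
    by (simp add: mult_left_mono mult.assoc)
qed

lemma transversal_on_compose_target:
  fixes P :: "(real^'k) \<times> (real^'n) \<Rightarrow> real^'m" and h :: "real^'m \<Rightarrow> real^'m"
  assumes "transversal_on P A B"
    and "\<forall>z\<in>A \<times> B. (P has_derivative P' z) (at z)" "0 \<le> K" "\<forall>z\<in>A \<times> B. \<forall>u. norm (P' z u) \<le> K * norm u"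
    and "\<forall>l\<in>A. \<forall>v\<in>B. \<forall>w\<in>B. v \<noteq> w \<longrightarrow> norm (jacobian (\<lambda>l'. Phi P l' v w) (at l)) \<le> M"
    and "P ` (A \<times> B) \<subseteq> V" "\<forall>a\<in>V. (h has_derivative h' a) (at a)"
    and "0 \<le> N" "\<forall>a\<in>V. \<forall>b\<in>V. \<forall>u. norm (h' a u - h' b u) \<le> N * norm (a - b) * norm u"
    and "1 \<le> R" "\<forall>a\<in>V. \<forall>b\<in>V. norm (a - b) \<le> R * norm (h a - h b)"
    and "compact HS" "\<forall>H\<in>HS. det H \<noteq> 0" "\<forall>a\<in>V. matrix (h' a) \<in> HS"
  shows "transversal_on (\<lambda>z. h (P z)) A B"
proof -
  obtain C where "C > 0" and C: "\<forall>l\<in>A. \<forall>v\<in>B. \<forall>w\<in>B. v \<noteq> w \<longrightarrow> norm (Phi P l v w) \<le> C \<longrightarrow> C\<^sup>2 \<le> gram_Phi P l v w"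
    using assms(1) unfolding transversal_on_iff by blast
  have "\<exists>\<mu>>0. \<exists>\<delta>>0. \<forall>H\<in>HS. \<forall>J\<in>{mat 1}. \<forall>D E :: real^'k^'m.
      norm D \<le> M \<longrightarrow> C\<^sup>2 \<le> \<bar>det (D ** transpose D)\<bar> \<longrightarrow> norm E < \<delta> \<longrightarrow>
      \<mu> \<le> \<bar>det (((H ** D + E) ** J) ** transpose ((H ** D + E) ** J))\<bar>"
    using assms(12,13) \<open>C > 0\<close> by (intro gram_det_uniform_lower_bound) auto
  then obtain \<mu> \<delta> where "\<mu> > 0" "\<delta> > 0" and \<mu>: "\<forall>H\<in>HS. \<forall>J\<in>{mat 1}. \<forall>D E :: real^'k^'m.
      norm D \<le> M \<longrightarrow> C\<^sup>2 \<le> \<bar>det (D ** transpose D)\<bar> \<longrightarrow> norm E < \<delta> \<longrightarrow>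
      \<mu> \<le> \<bar>det (((H ** D + E) ** J) ** transpose ((H ** D + E) ** J))\<bar>"
    by blast
  define Q where "Q = real CARD('m) * real CARD('k) * N * K + 1"
  have "0 \<le> real CARD('m) * real CARD('k) * N * K"
    using assms(3,8) by simp
  then have "Q > 0"
    unfolding Q_def by simp
  define c where "c = min (sqrt \<mu>) (min (C / R) (\<delta> / (2 * Q * R)))"
  have "c > 0"
    unfolding c_def using \<open>\<mu> > 0\<close> \<open>C > 0\<close> \<open>\<delta> > 0\<close> \<open>Q > 0\<close> assms(10) by simp
  have "c\<^sup>2 \<le> \<mu>"
    using power_mono[of c "sqrt \<mu>" 2] \<open>c > 0\<close> \<open>\<mu> > 0\<close> unfolding c_def by simp
  have "c \<le> C / R" "c \<le> \<delta> / (2 * Q * R)"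
    unfolding c_def by simp_all
  then have "R * c \<le> C" "Q * (R * c) < \<delta>"
    using \<open>\<delta> > 0\<close> \<open>Q > 0\<close> assms(10) by (simp_all add: field_simps)
  have "c\<^sup>2 \<le> gram_Phi (\<lambda>z. h (P z)) l v w"
    if "l \<in> A" "v \<in> B" "w \<in> B" "v \<noteq> w" "norm (Phi (\<lambda>z. h (P z)) l v w) \<le> c" for l v w
  proof -
    define a b where "a = P (l, v)" and "b = P (l, w)"
    have "a \<in> V" "b \<in> V"
      using assms(6) that(1-3) unfolding a_def b_def by auto
    have "norm (Phi P l v w) = norm (a - b) / norm (v - w)"
      unfolding Phi_def a_def b_def by simp
    also have "\<dots> \<le> R * (norm (h a - h b) / norm (v - w))"
      using assms(11) \<open>a \<in> V\<close> \<open>b \<in> V\<close> by (simp add: divide_right_mono)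
    also have "\<dots> = R * norm (Phi (\<lambda>z. h (P z)) l v w)"
      unfolding Phi_def a_def b_def by simp
    finally have Phi_le: "norm (Phi P l v w) \<le> R * c"
      using that(5) assms(10) by (meson mult_left_mono order_trans zero_le_one le_trans)
    then have "C\<^sup>2 \<le> gram_Phi P l v w"
      using C that(1-4) \<open>R * c \<le> C\<close> by auto
    define E where "E = matrix (\<lambda>u. (1 / norm (v - w)) *\<^sub>R (h' a (P' (l, w) (u, 0)) - h' b (P' (l, w) (u, 0))))"
    have jac: "jacobian (\<lambda>l'. Phi (\<lambda>z. h (P z)) l' v w) (at l) = matrix (h' a) ** jacobian (\<lambda>l'. Phi P l' v w) (at l) + E"
      unfolding E_def a_def b_def using assms(2,7) that(1-3) \<open>a \<in> V\<close> \<open>b \<in> V\<close>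
      by (intro jacobian_Phi_compose) (auto simp: a_def b_def)
    have "norm E \<le> real CARD('m) * real CARD('k) * (\<bar>1 / norm (v - w)\<bar> * (N * norm (a - b)) * K)"
    proof (unfold E_def, rule norm_matrix_difference_le)
      show "\<forall>u. norm (P' (l, w) (u, 0)) \<le> K * norm u"
      proof
        fix u
        show "norm (P' (l, w) (u, 0)) \<le> K * norm u"
          using assms(4)[rule_format, of "(l, w)" "(u, 0)"] that(1,3) by simp
      qed
    qed (use assms(8,9) \<open>a \<in> V\<close> \<open>b \<in> V\<close> in auto)
    also have "\<dots> \<le> Q * norm (Phi P l v w)"
      unfolding Q_def \<open>norm (Phi P l v w) = norm (a - b) / norm (v - w)\<close> by (simp add: algebra_simps)
    finally have "norm E \<le> Q * norm (Phi P l v w)" .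
    moreover have "Q * norm (Phi P l v w) \<le> Q * (R * c)"
      using Phi_le \<open>Q > 0\<close> by simp
    ultimately have "norm E < \<delta>"
      using \<open>Q * (R * c) < \<delta>\<close> by linarith
    moreover have "matrix (h' a) \<in> HS" "norm (jacobian (\<lambda>l'. Phi P l' v w) (at l)) \<le> M"
      using assms(5,14) \<open>a \<in> V\<close> that(1-4) by auto
    ultimately have "\<mu> \<le> gram_Phi (\<lambda>z. h (P z)) l v w"
      using \<mu> \<open>C\<^sup>2 \<le> gram_Phi P l v w\<close> unfolding gram_Phi_def jac by simp
    with \<open>c\<^sup>2 \<le> \<mu>\<close> show ?thesis
      by linarith
  qed
  then show ?thesis
    unfolding transversal_on_iff using \<open>c > 0\<close> by blast
qed

lemma locally_transversal_on_compose_target: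
  fixes P :: "(real^'k) \<times> (real^'n) \<Rightarrow> real^'m" and h :: "real^'m \<Rightarrow> real^'m"
  assumes "open \<Lambda>" "open \<Omega>" "open U" "open V" "locally_transversal_on P \<Lambda> \<Omega>" "Ck_on 2 P (\<Lambda> \<times> \<Omega>)"
    and "P ` (\<Lambda> \<times> \<Omega>) \<subseteq> U" "Ck_diffeo 2 h U V"
  shows "locally_transversal_on (\<lambda>z. h (P z)) \<Lambda> \<Omega>"
  unfolding locally_transversal_on_def
proof (intro ballI)
  fix p
  assume p: "p \<in> \<Lambda> \<times> \<Omega>"
  then obtain l0 w0 where "p = (l0, w0)"
    by (cases p)
  define a0 where "a0 = P p"
  have "a0 \<in> U"
    using assms(7) p unfolding a0_def by blast
  then obtain s R where "s > 0" "cball a0 s \<subseteq> U" "R \<ge> 1"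
    and R: "\<forall>a\<in>cball a0 s. \<forall>b\<in>cball a0 s. norm (a - b) \<le> R * norm (h a - h b)"
    using Ck_diffeo_inverse_lipschitz_cball[OF assms(8) _ assms(3,4)] by auto
  obtain h' where h': "\<forall>a\<in>U. (h has_derivative h' a) (at a)" "\<forall>u. Ck_on 1 (\<lambda>a. h' a u) U"
    using assms(8) Ck_on_SucE[of 1 h, unfolded Suc_1] unfolding Ck_diffeo_def by blast
  obtain N where "N \<ge> 0" and N: "\<forall>a\<in>cball a0 s. \<forall>b\<in>cball a0 s. \<forall>u. norm (h' a u - h' b u) \<le> N * norm (a - b) * norm u"
    using derivative_lipschitz_on_convex[OF h' compact_cball convex_cball \<open>cball a0 s \<subseteq> U\<close>] by blast
  obtain P' where P': "\<forall>z\<in>\<Lambda> \<times> \<Omega>. (P has_derivative P' z) (at z)" "\<forall>u. Ck_on 1 (\<lambda>z. P' z u) (\<Lambda> \<times> \<Omega>)"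
    using Ck_on_SucE[of 1 P, unfolded Suc_1, OF assms(6)] by blast
  obtain \<rho>1 where "\<rho>1 > 0" and trans: "transversal_on P (cball l0 \<rho>1) (cball w0 \<rho>1)"
    using locally_transversal_onE_cball[OF assms(5)] p \<open>p = (l0, w0)\<close> by blast
  have "open (P -` ball a0 s \<inter> (\<Lambda> \<times> \<Omega>))"
    using open_vimage_Ck_on[OF open_Times[OF assms(1,2)] assms(6) open_ball] .
  then obtain \<rho>2 where "\<rho>2 > 0" and \<rho>2: "cball l0 \<rho>2 \<times> cball w0 \<rho>2 \<subseteq> P -` ball a0 s \<inter> (\<Lambda> \<times> \<Omega>)"
    using open_contains_cball_Times p \<open>s > 0\<close> unfolding \<open>p = (l0, w0)\<close> a0_def by (metis IntI centre_in_ball vimageI)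
  define \<rho> where "\<rho> = min \<rho>1 \<rho>2"
  define A B where "A = cball l0 \<rho>" and "B = cball w0 \<rho>"
  have "A \<subseteq> cball l0 \<rho>2" "B \<subseteq> cball w0 \<rho>2"
    unfolding A_def B_def \<rho>_def by (simp_all add: subset_cball)
  then have "A \<times> B \<subseteq> P -` ball a0 s \<inter> (\<Lambda> \<times> \<Omega>)"
    using \<rho>2 by (meson Sigma_mono order_trans)
  then have "A \<times> B \<subseteq> \<Lambda> \<times> \<Omega>" "P ` (A \<times> B) \<subseteq> cball a0 s"
    by auto
  moreover have "l0 \<in> A" "w0 \<in> B"
    unfolding A_def B_def \<rho>_def using \<open>\<rho>1 > 0\<close> \<open>\<rho>2 > 0\<close> by simp_all
  ultimately have "A \<subseteq> \<Lambda>" "B \<subseteq> \<Omega>"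
    by blast+
  have "compact A" "convex A" "compact B" "convex B"
    unfolding A_def B_def by simp_all
  have "\<forall>u. continuous_on (\<Lambda> \<times> \<Omega>) (\<lambda>z. P' z u)"
    using P'(2) Ck_on_imp_continuous_on by blast
  then have "\<exists>K\<ge>0. \<forall>z\<in>A \<times> B. \<forall>u. norm (P' z u) \<le> K * norm u"
    using \<open>compact A\<close> \<open>compact B\<close> \<open>A \<times> B \<subseteq> \<Lambda> \<times> \<Omega>\<close>
    by (intro derivative_bounded_on_compact[OF P'(1)] compact_Times)
  then obtain K where "K \<ge> 0" and K: "\<forall>z\<in>A \<times> B. \<forall>u. norm (P' z u) \<le> K * norm u"
    by blast
  obtain M where M: "\<forall>l\<in>A. \<forall>v\<in>B. \<forall>w\<in>B. v \<noteq> w \<longrightarrow> norm (jacobian (\<lambda>l'. Phi P l' v w) (at l)) \<le> M"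
    using norm_jacobian_Phi_le[OF P' \<open>compact A\<close> \<open>convex A\<close> \<open>compact B\<close> \<open>convex B\<close> \<open>A \<times> B \<subseteq> \<Lambda> \<times> \<Omega>\<close>]
    by blast
  define HS where "HS = (\<lambda>a. matrix (h' a)) ` cball a0 s"
  have "transversal_on (\<lambda>z. h (P z)) A B"
  proof (rule transversal_on_compose_target[where P = P and h = h and P' = P' and K = K and M = M and V = "cball a0 s"
        and h' = h' and N = N and R = R and HS = HS])
    show "transversal_on P A B"
      using trans subset_cball[of \<rho> \<rho>1] unfolding A_def B_def \<rho>_def by (rule transversal_on_subset) auto
    show "\<forall>z\<in>A \<times> B. (P has_derivative P' z) (at z)"
      using P'(1) \<open>A \<times> B \<subseteq> \<Lambda> \<times> \<Omega>\<close> by blast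
    show "\<forall>a\<in>cball a0 s. (h has_derivative h' a) (at a)"
      using h'(1) \<open>cball a0 s \<subseteq> U\<close> by blast
    show "compact HS"
      unfolding HS_def using h'(2) Ck_on_imp_continuous_on \<open>cball a0 s \<subseteq> U\<close> compact_cball
      by (intro compact_image_matrix_derivative[where S = U]) blast+
    show "\<forall>H\<in>HS. det H \<noteq> 0"
      unfolding HS_def using det_derivative_Ck_diffeo_nonzero[OF assms(8) _ assms(3)] h'(1) \<open>cball a0 s \<subseteq> U\<close>
      by auto
  qed (use K M N R \<open>K \<ge> 0\<close> \<open>N \<ge> 0\<close> \<open>R \<ge> 1\<close> \<open>P ` (A \<times> B) \<subseteq> cball a0 s\<close> in \<open>auto simp: HS_def\<close>)
  then have "transversal_on (\<lambda>z. h (P z)) (ball l0 \<rho>) (ball w0 \<rho>)"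
    unfolding A_def B_def by (rule transversal_on_subset[OF _ ball_subset_cball ball_subset_cball])
  moreover have "ball l0 \<rho> \<subseteq> \<Lambda>" "ball w0 \<rho> \<subseteq> \<Omega>"
    using \<open>A \<subseteq> \<Lambda>\<close> \<open>B \<subseteq> \<Omega>\<close> ball_subset_cball unfolding A_def B_def by blast+
  moreover have "p \<in> ball l0 \<rho> \<times> ball w0 \<rho>"
    using \<open>p = (l0, w0)\<close> \<open>\<rho>1 > 0\<close> \<open>\<rho>2 > 0\<close> unfolding \<rho>_def by simp
  ultimately show "\<exists>A' B'. open A' \<and> open B' \<and> p \<in> A' \<times> B' \<and> A' \<subseteq> \<Lambda> \<and> B' \<subseteq> \<Omega> \<and> transversal_on (\<lambda>z. h (P z)) A' B'"
    by (intro exI[of _ "ball l0 \<rho>"] exI[of _ "ball w0 \<rho>"]) simp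
qed

theorem lemma2p2:
  fixes L :: nat
    and \<Lambda> \<Lambda>t :: "(real^'k) set" and \<Omega> \<Omega>t :: "(real^'n) set" and U Ut :: "(real^'m) set"
    and f :: "real^'k \<Rightarrow> real^'k" and g :: "real^'n \<Rightarrow> real^'n" and h :: "real^'m \<Rightarrow> real^'m"
    and P Pt :: "(real^'k) \<times> (real^'n) \<Rightarrow> real^'m"
  assumes "L \<ge> 2"
    and "CARD('k) \<ge> CARD('m)"
    and "open \<Lambda>" "open \<Lambda>t" "open \<Omega>" "open \<Omega>t" "open U" "open Ut"
    and "Ck_diffeo L f \<Lambda> \<Lambda>t" "Ck_diffeo L g \<Omega> \<Omega>t" "Ck_diffeo L h U Ut"
    and "P ` (\<Lambda> \<times> \<Omega>) \<subseteq> U"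
    and "\<forall>l\<in>\<Lambda>. \<forall>w\<in>\<Omega>. Pt (f l, g w) = h (P (l, w))"
    and "Ck_on L P (\<Lambda> \<times> \<Omega>)"
    and "locally_transversal_on P \<Lambda> \<Omega>"
  shows "Ck_on L Pt (\<Lambda>t \<times> \<Omega>t) \<and> locally_transversal_on Pt \<Lambda>t \<Omega>t"
proof -
  obtain fi where fi: "Ck_diffeo L fi \<Lambda>t \<Lambda>" "\<forall>y\<in>\<Lambda>t. f (fi y) = y"
    by (rule Ck_diffeo_inverse[OF assms(9)])
  obtain gi where gi: "Ck_diffeo L gi \<Omega>t \<Omega>" "\<forall>y\<in>\<Omega>t. g (gi y) = y"
    by (rule Ck_diffeo_inverse[OF assms(10)])
  have fi_maps: "fi ` \<Lambda>t \<subseteq> \<Lambda>" "Ck_on L fi \<Lambda>t" and gi_maps: "gi ` \<Omega>t \<subseteq> \<Omega>" "Ck_on L gi \<Omega>t"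
    and "Ck_on L h U"
    using fi(1) gi(1) assms(11) unfolding Ck_diffeo_def by auto
  define P1 where "P1 = (\<lambda>z. h (P z))"
  define P2 where "P2 = (\<lambda>(l, w). P1 (fi l, w))"
  have Pt_eq: "Pt (l, w) = P1 (fi l, gi w)" if "l \<in> \<Lambda>t" "w \<in> \<Omega>t" for l w
  proof -
    have "fi l \<in> \<Lambda>" "gi w \<in> \<Omega>"
      using that fi_maps(1) gi_maps(1) by auto
    then have "Pt (f (fi l), g (gi w)) = h (P (fi l, gi w))"
      using assms(13) by blast
    then show ?thesis
      using that fi(2) gi(2) unfolding P1_def by simp
  qed
  have "Ck_on L P1 (\<Lambda> \<times> \<Omega>)"
    unfolding P1_def by (rule Ck_on_compose[OF open_Times[OF assms(3,5)] \<open>Ck_on L h U\<close> assms(14,12)])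
  then have "Ck_on L (\<lambda>(l, w). P1 (fi l, gi w)) (\<Lambda>t \<times> \<Omega>t)"
    by (rule Ck_on_reparametrize[OF assms(4,6) _ fi_maps(2,1) gi_maps(2,1)])
  then have smooth: "Ck_on L Pt (\<Lambda>t \<times> \<Omega>t)"
    by (rule Ck_on_cong[OF open_Times[OF assms(4,6)], rotated]) (auto simp: Pt_eq)
  have "Ck_on L P2 (\<Lambda>t \<times> \<Omega>)"
    using Ck_on_reparametrize[OF assms(4,5) \<open>Ck_on L P1 (\<Lambda> \<times> \<Omega>)\<close> fi_maps(2,1) Ck_on_ident]
    unfolding P2_def by simp
  have "locally_transversal_on P1 \<Lambda> \<Omega>"
    unfolding P1_def using Ck_on_le[OF assms(14,1)] Ck_diffeo_le[OF assms(11,1)]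
    by (rule locally_transversal_on_compose_target[OF assms(3,5,7,8,15) _ assms(12)])
  moreover have "Ck_on 2 P1 (\<Lambda> \<times> \<Omega>)" "Ck_diffeo 1 fi \<Lambda>t \<Lambda>"
    using Ck_on_le[OF \<open>Ck_on L P1 (\<Lambda> \<times> \<Omega>)\<close> assms(1)] Ck_diffeo_le[OF fi(1)] assms(1) by auto
  ultimately have "locally_transversal_on P2 \<Lambda>t \<Omega>"
    by (rule locally_transversal_on_reparametrize_param[OF assms(4)]) (simp add: P2_def)
  moreover have "\<forall>z\<in>\<Lambda>t \<times> \<Omega>. P2 differentiable (at z)" "Ck_diffeo 1 gi \<Omega>t \<Omega>"
    using Ck_on_imp_differentiable[OF \<open>Ck_on L P2 (\<Lambda>t \<times> \<Omega>)\<close>] Ck_diffeo_le[OF gi(1)] assms(1) by auto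
  ultimately have "locally_transversal_on Pt \<Lambda>t \<Omega>t"
    by (rule locally_transversal_on_reparametrize_fibre[OF assms(4,6)]) (simp add: Pt_eq P2_def)
  with smooth show ?thesis
    by blast
qed

end
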